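(* Let $X=(T,E)$ and $Y=(Z,F)$ be colored graphs and $W$ the fundamental magic biunitary of $A(X*Y)$. For each $\alpha\in Z$, the matrix $U^\alpha=(U^\alpha_{ij})_{i,j\in T}$ with $$U^\alpha_{ij}=\sum_{\beta\in Z}W_{i\alpha,j\beta}$$ is a magic biunitary.
   Context: A colored graph $X=(V,E)$ is a finite set $V$ with a partition $E=\{E_1,\dots,E_p\}$ of $(V\times V)-\Delta_V$. Free product: $X*Y$ has vertex set $T\times Z$ and partition $\{E_r^\circ\}\cup\{F_s^\circ\}$, $E_r^\circ=\{(i\alpha,j\alpha)\mid(i,j)\in E_r,\alpha\in Z\}$, $F_s^\circ=\{(i\alpha,j\beta)\mid i,j\in T,(\alpha,\beta)\in F_s\}$. A magic biunitary is a square matrix of projections whose rows and columns are partitions of unity. $A(X*Y)$ is the quotient of the universal C*-algebra generated by the entries of a $|T||Z|\times|T||Z|$ magic biunitary $W$ by the relations $Wd=dW$, $d$ the Laplacian of $X*Y$ ($d_{xx}=0$, $d_{xy}=c(k)$ for $(x,y)$ in the $k$-th class, $c$ injective into ${\mathbb C}$). *)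

theory Defs
  imports Complex_Main "HOL-Library.Disjoint_Sets"
begin

class complex_inner = ab_group_add +
  fixes cscale :: "complex \<Rightarrow> 'a \<Rightarrow> 'a"
    and cinner :: "'a \<Rightarrow> 'a \<Rightarrow> complex"
  assumes cscale_add_right: "cscale a (x + y) = cscale a x + cscale a y"
    and cscale_add_left: "cscale (a + b) x = cscale a x + cscale b x"
    and cscale_cscale: "cscale a (cscale b x) = cscale (a * b) x"
    and cscale_one: "cscale 1 x = x"
    and cinner_commute: "cinner x y = cnj (cinner y x)"
    and cinner_add_right: "cinner x (y + z) = cinner x y + cinner x z"
    and cinner_cscale_right: "cinner x (cscale a y) = a * cinner x y"
    and cinner_self_real: "Im (cinner x x) = 0"
    and cinner_self_nonneg: "0 \<le> Re (cinner x x)"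
    and cinner_self_eq_zero: "cinner x x = 0 \<longleftrightarrow> x = 0"

definition clinear :: "('a::complex_inner \<Rightarrow> 'a) \<Rightarrow> bool" where
  "clinear f \<longleftrightarrow> (\<forall>x y. f (x + y) = f x + f y) \<and> (\<forall>a x. f (cscale a x) = cscale a (f x))"

definition is_projection :: "('a::complex_inner \<Rightarrow> 'a) \<Rightarrow> bool" where
  "is_projection p \<longleftrightarrow> clinear p \<and> p \<circ> p = p \<and> (\<forall>x y. cinner (p x) y = cinner x (p y))"

definition opsum :: "'i set \<Rightarrow> ('i \<Rightarrow> 'a::complex_inner \<Rightarrow> 'a) \<Rightarrow> 'a \<Rightarrow> 'a" where
  "opsum I f = (\<lambda>v. \<Sum>i\<in>I. f i v)"

definition magic_biunitary :: "'i set \<Rightarrow> ('i \<Rightarrow> 'i \<Rightarrow> 'a::complex_inner \<Rightarrow> 'a) \<Rightarrow> bool" where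
  "magic_biunitary I M \<longleftrightarrow>
     (\<forall>i\<in>I. \<forall>j\<in>I. is_projection (M i j)) \<and>
     (\<forall>i\<in>I. opsum I (\<lambda>j. M i j) = id) \<and>
     (\<forall>j\<in>I. opsum I (\<lambda>i. M i j) = id)"

definition colored_graph :: "'v set \<Rightarrow> ('v \<times> 'v) set set \<Rightarrow> bool" where
  "colored_graph V E \<longleftrightarrow> finite V \<and> partition_on {(x, y). x \<in> V \<and> y \<in> V \<and> x \<noteq> y} E"

definition free_prod_classes ::
  "'t set \<Rightarrow> 'z set \<Rightarrow> ('t \<times> 't) set set \<Rightarrow> ('z \<times> 'z) set set \<Rightarrow> (('t \<times> 'z) \<times> ('t \<times> 'z)) set set" where
  "free_prod_classes T Z E F =
     (\<lambda>Er. {((i, a), (j, a)) | i j a. (i, j) \<in> Er \<and> a \<in> Z}) ` E \<union>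
     (\<lambda>Fs. {((i, a), (j, b)) | i j a b. i \<in> T \<and> j \<in> T \<and> (a, b) \<in> Fs}) ` F"

definition laplacian :: "('v \<times> 'v) set set \<Rightarrow> (('v \<times> 'v) set \<Rightarrow> complex) \<Rightarrow> 'v \<Rightarrow> 'v \<Rightarrow> complex" where
  "laplacian P c x y = (if x = y then 0 else c (THE B. B \<in> P \<and> (x, y) \<in> B))"

definition commutes_scalar :: "'i set \<Rightarrow> ('i \<Rightarrow> 'i \<Rightarrow> 'a::complex_inner \<Rightarrow> 'a) \<Rightarrow> ('i \<Rightarrow> 'i \<Rightarrow> complex) \<Rightarrow> bool" where
  "commutes_scalar V W d \<longleftrightarrow>
     (\<forall>x\<in>V. \<forall>y\<in>V. (\<lambda>v. \<Sum>z\<in>V. cscale (d z y) (W x z v)) = (\<lambda>v. \<Sum>z\<in>V. cscale (d x z) (W z y v)))"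

end

theory Submission
  imports Defs
begin

text \<open>
  On a pair of vertices of X * Y lying in one copy of X (equal Z-coordinates)
  the Laplacian takes a colour value of an E-class, on any other pair the value of an
  F-class; as the colouring is injective these values differ. Commutation of W with
  the Laplacian therefore gives the block orthogonality
  W_{x a} W_{b y} = 0 whenever exactly one of the pairs (x, b), (a, y) stays inside a
  copy of X. Consequently U^\<alpha>_{ij} is a sum of pairwise orthogonal projections, each
  row sum of U^\<alpha> is a row sum of W, and the block sums
  \<Sum>_j W_{i\<alpha>, j\<beta>} and \<Sum>_i W_{i\<alpha>, j\<beta>} coincide (both equal their product),
  which turns the column sums of U^\<alpha> into row sums of W as well.
\<close>

lemma cscale_zero_right [simp]: "cscale a (0::'a::complex_inner) = 0"
proof -
  have "cscale a (0::'a) = cscale a 0 + cscale a 0" by (metis add.right_neutral cscale_add_right)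
  then show ?thesis by simp
qed

lemma cscale_zero_left [simp]: "cscale 0 (x::'a::complex_inner) = 0"
proof -
  have "cscale 0 x = cscale 0 x + cscale 0 x" by (metis add.right_neutral cscale_add_left)
  then show ?thesis by simp
qed

lemma cscale_diff_left: "cscale (a - b) (x::'a::complex_inner) = cscale a x - cscale b x"
  by (metis add_diff_cancel cscale_add_left diff_add_cancel)

lemma cscale_sum_right: "cscale a (\<Sum>i\<in>I. f i) = (\<Sum>i\<in>I. cscale a (f i :: 'a::complex_inner))"
  by (induction I rule: infinite_finite_induct) (auto simp: cscale_add_right)

lemma cscale_eq_0_iff: "cscale a (x::'a::complex_inner) = 0 \<longleftrightarrow> a = 0 \<or> x = 0"
proof
  assume ax: "cscale a x = 0"
  show "a = 0 \<or> x = 0"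
  proof (cases "a = 0")
    case False
    then have "x = cscale (inverse a) (cscale a x)" by (simp add: cscale_cscale cscale_one)
    also have "\<dots> = 0" using ax by simp
    finally show ?thesis by simp
  qed simp
qed auto

lemma cinner_zero_right [simp]: "cinner x (0::'a::complex_inner) = 0"
proof -
  have "cinner x (0::'a) = cinner x 0 + cinner x 0" by (metis add.right_neutral cinner_add_right)
  then show ?thesis by simp
qed

lemma cinner_zero_left [simp]: "cinner (0::'a::complex_inner) x = 0"
  by (metis cinner_commute cinner_zero_right complex_cnj_zero)

lemma cinner_add_left: "cinner (x + y) (z::'a::complex_inner) = cinner x z + cinner y z"
  by (metis cinner_commute cinner_add_right complex_cnj_add)

lemma cinner_sum_left: "cinner (\<Sum>i\<in>I. f i) (z::'a::complex_inner) = (\<Sum>i\<in>I. cinner (f i) z)"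
  by (induction I rule: infinite_finite_induct) (auto simp: cinner_add_left)

lemma cinner_sum_right: "cinner z (\<Sum>i\<in>I. f i) = (\<Sum>i\<in>I. cinner z (f i :: 'a::complex_inner))"
  by (induction I rule: infinite_finite_induct) (auto simp: cinner_add_right)

lemma clinear_zero: "clinear p \<Longrightarrow> p 0 = 0"
  unfolding clinear_def by (metis add.right_neutral add_left_cancel)

lemma clinear_sum: "clinear p \<Longrightarrow> p (\<Sum>i\<in>I. f i) = (\<Sum>i\<in>I. p (f i))"
  by (induction I rule: infinite_finite_induct) (auto simp: clinear_zero clinear_def)

lemma clinear_opsum: "(\<And>i. i \<in> I \<Longrightarrow> clinear (f i)) \<Longrightarrow> clinear (opsum I f)"
  unfolding clinear_def opsum_def by (simp add: sum.distrib cscale_sum_right)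

lemma is_projection_clinear: "is_projection p \<Longrightarrow> clinear p"
  unfolding is_projection_def by blast

lemma is_projection_idem: "is_projection p \<Longrightarrow> p (p x) = p x"
  unfolding is_projection_def by (metis comp_apply)

lemma is_projection_selfadjoint: "is_projection p \<Longrightarrow> cinner (p x) y = cinner x (p y)"
  unfolding is_projection_def by blast

lemma sum_eq_single:
  assumes "finite A" "a \<in> A" "\<And>x. x \<in> A \<Longrightarrow> x \<noteq> a \<Longrightarrow> f x = 0"
  shows "sum f A = f a"
  using sum.mono_neutral_left[of A "{a}" f] assms by auto

lemma sum_product_eq_slice:
  assumes "finite T" "finite Z" "\<alpha> \<in> Z"
    and "\<And>t \<gamma>. t \<in> T \<Longrightarrow> \<gamma> \<in> Z \<Longrightarrow> \<gamma> \<noteq> \<alpha> \<Longrightarrow> f (t, \<gamma>) = 0"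
  shows "(\<Sum>y\<in>T \<times> Z. f y) = (\<Sum>t\<in>T. f (t, \<alpha>))"
proof -
  have "(\<Sum>y\<in>T \<times> Z. f y) = (\<Sum>t\<in>T. \<Sum>\<gamma>\<in>Z. f (t, \<gamma>))"
    by (simp add: sum.cartesian_product)
  also have "\<dots> = (\<Sum>t\<in>T. f (t, \<alpha>))"
    using assms by (intro sum.cong refl sum_eq_single) auto
  finally show ?thesis .
qed

text \<open>In a finite partition of unity by projections, \<open>\<parallel>x\<parallel>\<^sup>2 = \<Sum>\<^sub>j \<parallel>p\<^sub>j x\<parallel>\<^sup>2\<close> for
  \<open>x = p\<^sub>k v\<close>; the \<open>j = k\<close> term already accounts for all of it.\<close>
lemma projections_sum_id_orthogonal:
  fixes p :: "'i \<Rightarrow> 'a::complex_inner \<Rightarrow> 'a"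
  assumes fin: "finite I" and proj: "\<And>i. i \<in> I \<Longrightarrow> is_projection (p i)"
    and sum_id: "\<And>v. (\<Sum>i\<in>I. p i v) = v" and "i \<in> I" "k \<in> I" "i \<noteq> k"
  shows "p i (p k v) = 0"
proof -
  define x where "x = p k v"
  define n where "n j = cinner (p j x) (p j x)" for j
  have n_eq: "n j = cinner (p j x) x" if "j \<in> I" for j
    unfolding n_def using proj[OF that] by (simp add: is_projection_idem is_projection_selfadjoint)
  have "cinner x x = (\<Sum>j\<in>I. cinner (p j x) x)"
    by (simp add: sum_id cinner_sum_left[symmetric])
  also have "\<dots> = (\<Sum>j\<in>I. n j)" using n_eq by simp
  also have "\<dots> = n k + (\<Sum>j\<in>I - {k}. n j)" using fin \<open>k \<in> I\<close> by (simp add: sum.remove)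
  also have "n k = cinner x x"
    unfolding n_def x_def using proj[OF \<open>k \<in> I\<close>] by (simp add: is_projection_idem)
  finally have "(\<Sum>j\<in>I - {k}. n j) = 0" by simp
  then have "(\<Sum>j\<in>I - {k}. Re (n j)) = 0" by (simp add: Re_sum[symmetric])
  moreover have "\<forall>j\<in>I - {k}. 0 \<le> Re (n j)" unfolding n_def using cinner_self_nonneg by blast
  ultimately have "Re (n i) = 0"
    using fin \<open>i \<in> I\<close> \<open>i \<noteq> k\<close> sum_nonneg_eq_0_iff[of "I - {k}" "\<lambda>j. Re (n j)"] by blast
  moreover have "Im (n i) = 0" unfolding n_def by (rule cinner_self_real)
  ultimately have "n i = 0" by (simp add: complex_eqI)
  then show ?thesis unfolding n_def x_def using cinner_self_eq_zero by blast
qed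

lemma is_projection_opsum:
  fixes p :: "'i \<Rightarrow> 'a::complex_inner \<Rightarrow> 'a"
  assumes fin: "finite I" and proj: "\<And>i. i \<in> I \<Longrightarrow> is_projection (p i)"
    and orth: "\<And>i j v. i \<in> I \<Longrightarrow> j \<in> I \<Longrightarrow> i \<noteq> j \<Longrightarrow> p i (p j v) = 0"
  shows "is_projection (opsum I p)"
proof -
  have "opsum I p (opsum I p v) = opsum I p v" for v
  proof -
    have "opsum I p (opsum I p v) = (\<Sum>i\<in>I. \<Sum>j\<in>I. p i (p j v))"
      unfolding opsum_def using proj by (simp add: clinear_sum is_projection_clinear)
    also have "\<dots> = (\<Sum>i\<in>I. p i (p i v))"
      using fin orth by (intro sum.cong refl sum_eq_single) auto
    finally show ?thesis unfolding opsum_def using proj by (simp add: is_projection_idem)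
  qed
  moreover have "cinner (opsum I p x) y = cinner x (opsum I p y)" for x y
    unfolding opsum_def using proj by (simp add: cinner_sum_left cinner_sum_right is_projection_selfadjoint)
  moreover have "clinear (opsum I p)" using proj by (simp add: clinear_opsum is_projection_clinear)
  ultimately show ?thesis unfolding is_projection_def by auto
qed

lemma magic_biunitary_projection:
  "magic_biunitary V M \<Longrightarrow> i \<in> V \<Longrightarrow> j \<in> V \<Longrightarrow> is_projection (M i j)"
  unfolding magic_biunitary_def by blast

lemma magic_biunitary_row_sum: "magic_biunitary V M \<Longrightarrow> i \<in> V \<Longrightarrow> (\<Sum>j\<in>V. M i j v) = v"
  unfolding magic_biunitary_def opsum_def by (metis id_apply)

lemma magic_biunitary_col_sum: "magic_biunitary V M \<Longrightarrow> j \<in> V \<Longrightarrow> (\<Sum>i\<in>V. M i j v) = v"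
  unfolding magic_biunitary_def opsum_def by (metis id_apply)

lemma magic_biunitary_row_orthogonal:
  assumes "finite V" "magic_biunitary V M" "i \<in> V" "a \<in> V" "z \<in> V" "a \<noteq> z"
  shows "M i a (M i z v) = 0"
  using assms by (intro projections_sum_id_orthogonal[of V "M i"])
    (auto intro: magic_biunitary_projection magic_biunitary_row_sum)

lemma magic_biunitary_col_orthogonal:
  assumes "finite V" "magic_biunitary V M" "j \<in> V" "a \<in> V" "z \<in> V" "a \<noteq> z"
  shows "M a j (M z j v) = 0"
  using assms by (intro projections_sum_id_orthogonal[of V "\<lambda>i. M i j"])
    (auto intro: magic_biunitary_projection magic_biunitary_col_sum)

lemma commutes_scalar_orthogonal:
  fixes W :: "'i \<Rightarrow> 'i \<Rightarrow> 'a::complex_inner \<Rightarrow> 'a"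
  assumes fin: "finite V" and mb: "magic_biunitary V W" and cs: "commutes_scalar V W d"
    and V: "x \<in> V" "a \<in> V" "b \<in> V" "y \<in> V" and neq: "d a y \<noteq> d x b"
  shows "W x a (W b y v) = 0"
proof -
  define u where "u = W b y v"
  have lin: "clinear (W x a)" using magic_biunitary_projection[OF mb V(1,2)] is_projection_clinear by blast
  have "(\<Sum>z\<in>V. cscale (d z y) (W x z u)) = (\<Sum>z\<in>V. cscale (d x z) (W z y u))"
    using cs V unfolding commutes_scalar_def by meson
  \<comment> \<open>apply W x a to the (x, y) entry of W d = d W; only the z = a resp. z = b term survives\<close>
  then have "W x a (\<Sum>z\<in>V. cscale (d z y) (W x z u)) = W x a (\<Sum>z\<in>V. cscale (d x z) (W z y u))"
    by simp
  moreover have "W x a (\<Sum>z\<in>V. cscale (d z y) (W x z u)) = cscale (d a y) (W x a u)"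
  proof -
    have "W x a (\<Sum>z\<in>V. cscale (d z y) (W x z u)) = (\<Sum>z\<in>V. cscale (d z y) (W x a (W x z u)))"
      using lin by (simp add: clinear_sum clinear_def)
    also have "\<dots> = cscale (d a y) (W x a (W x a u))"
      by (rule sum_eq_single[OF fin V(2)]) (simp add: magic_biunitary_row_orthogonal[OF fin mb V(1,2)])
    finally show ?thesis using is_projection_idem magic_biunitary_projection[OF mb V(1,2)] by metis
  qed
  moreover have "W x a (\<Sum>z\<in>V. cscale (d x z) (W z y u)) = cscale (d x b) (W x a u)"
  proof -
    have "W x a (\<Sum>z\<in>V. cscale (d x z) (W z y u)) = (\<Sum>z\<in>V. cscale (d x z) (W x a (W z y u)))"
      using lin by (simp add: clinear_sum clinear_def)
    also have "\<dots> = cscale (d x b) (W x a (W b y u))"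
      by (rule sum_eq_single[OF fin V(3)])
        (simp add: u_def magic_biunitary_col_orthogonal[OF fin mb V(4) _ V(3)] clinear_zero[OF lin])
    also have "W b y u = u"
      unfolding u_def using is_projection_idem magic_biunitary_projection[OF mb V(3,4)] by metis
    finally show ?thesis .
  qed
  ultimately have "cscale (d a y - d x b) (W x a u) = 0" by (simp add: cscale_diff_left)
  then show ?thesis using neq by (simp add: cscale_eq_0_iff u_def)
qed

lemma block_row_sum_eq_block_col_sum:
  fixes W :: "'t \<times> 'z \<Rightarrow> 't \<times> 'z \<Rightarrow> 'h::complex_inner \<Rightarrow> 'h"
  assumes fin: "finite T" "finite Z" and mb: "magic_biunitary (T \<times> Z) W"
    and block_orth: "\<And>x a b y v. x \<in> T \<times> Z \<Longrightarrow> a \<in> T \<times> Z \<Longrightarrow> b \<in> T \<times> Z \<Longrightarrow> y \<in> T \<times> Z \<Longrightarrow>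
      (snd x = snd b) \<noteq> (snd a = snd y) \<Longrightarrow> W x a (W b y v) = 0"
    and ij: "i \<in> T" "j \<in> T" and \<alpha>\<beta>: "\<alpha> \<in> Z" "\<beta> \<in> Z"
  shows "opsum T (\<lambda>j'. W (i, \<alpha>) (j', \<beta>)) = opsum T (\<lambda>i'. W (i', \<alpha>) (j, \<beta>))"
proof
  fix v
  define A where "A = opsum T (\<lambda>j'. W (i, \<alpha>) (j', \<beta>))"
  define B where "B = opsum T (\<lambda>i'. W (i', \<alpha>) (j, \<beta>))"
  have A_lin: "clinear A"
    unfolding A_def using ij \<alpha>\<beta>
    by (intro clinear_opsum is_projection_clinear magic_biunitary_projection[OF mb]) auto
  have "A v = A (\<Sum>y\<in>T \<times> Z. W y (j, \<beta>) v)"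
    using magic_biunitary_col_sum[OF mb] ij \<alpha>\<beta> by simp
  also have "\<dots> = (\<Sum>y\<in>T \<times> Z. A (W y (j, \<beta>) v))" using A_lin by (rule clinear_sum)
  also have "\<dots> = (\<Sum>i'\<in>T. A (W (i', \<alpha>) (j, \<beta>) v))"
    using fin \<alpha>\<beta> ij by (intro sum_product_eq_slice) (auto simp: A_def opsum_def intro!: sum.neutral block_orth)
  also have "\<dots> = A (B v)" unfolding B_def opsum_def using A_lin by (simp add: clinear_sum)
  finally have A_eq: "A v = A (B v)" .
  have "B v = (\<Sum>z\<in>T \<times> Z. W (i, \<alpha>) z (B v))"
    using magic_biunitary_row_sum[OF mb] ij \<alpha>\<beta> by simp
  also have "\<dots> = A (B v)"
    unfolding A_def opsum_def using fin \<alpha>\<beta> ij magic_biunitary_projection[OF mb]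
    by (intro sum_product_eq_slice)
      (auto simp: B_def opsum_def clinear_sum is_projection_clinear intro!: sum.neutral block_orth)
  finally show "A v = B v" using A_eq by simp
qed

lemma magic_biunitary_block_sum:
  fixes W :: "'t \<times> 'z \<Rightarrow> 't \<times> 'z \<Rightarrow> 'h::complex_inner \<Rightarrow> 'h"
  assumes fin: "finite T" "finite Z" and mb: "magic_biunitary (T \<times> Z) W"
    and block_orth: "\<And>x a b y v. x \<in> T \<times> Z \<Longrightarrow> a \<in> T \<times> Z \<Longrightarrow> b \<in> T \<times> Z \<Longrightarrow> y \<in> T \<times> Z \<Longrightarrow>
      (snd x = snd b) \<noteq> (snd a = snd y) \<Longrightarrow> W x a (W b y v) = 0"
    and \<alpha>: "\<alpha> \<in> Z"
  shows "magic_biunitary T (\<lambda>i j. opsum Z (\<lambda>\<beta>. W (i, \<alpha>) (j, \<beta>)))"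
proof -
  have fin_prod: "finite (T \<times> Z)" using fin by simp
  have row_sum: "(\<Sum>j\<in>T. \<Sum>\<beta>\<in>Z. W (i, \<alpha>) (j, \<beta>) v) = v" if "i \<in> T" for i v
    using magic_biunitary_row_sum[OF mb, of "(i, \<alpha>)" v] that \<alpha> by (simp add: sum.cartesian_product)
  have "is_projection (opsum Z (\<lambda>\<beta>. W (i, \<alpha>) (j, \<beta>)))" if "i \<in> T" "j \<in> T" for i j
    using that \<alpha> fin
    by (intro is_projection_opsum magic_biunitary_projection[OF mb]
        magic_biunitary_row_orthogonal[OF fin_prod mb]) auto
  moreover have "opsum T (\<lambda>j. opsum Z (\<lambda>\<beta>. W (i, \<alpha>) (j, \<beta>))) = id" if "i \<in> T" for i
    using row_sum[OF that] by (auto simp: opsum_def)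
  moreover have "opsum T (\<lambda>i. opsum Z (\<lambda>\<beta>. W (i, \<alpha>) (j, \<beta>))) = id" if j: "j \<in> T" for j
  proof
    fix v
    have "opsum T (\<lambda>i. opsum Z (\<lambda>\<beta>. W (i, \<alpha>) (j, \<beta>))) v = (\<Sum>\<beta>\<in>Z. opsum T (\<lambda>i. W (i, \<alpha>) (j, \<beta>)) v)"
      unfolding opsum_def by (rule sum.swap)
    also have "\<dots> = (\<Sum>\<beta>\<in>Z. opsum T (\<lambda>j'. W (j, \<alpha>) (j', \<beta>)) v)"
      using block_row_sum_eq_block_col_sum[OF fin mb block_orth j j \<alpha>] by simp
    also have "\<dots> = v" unfolding opsum_def using row_sum[OF j] by (simp add: sum.swap[of _ Z])
    finally show "opsum T (\<lambda>i. opsum Z (\<lambda>\<beta>. W (i, \<alpha>) (j, \<beta>))) v = id v" by simp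
  qed
  ultimately show ?thesis unfolding magic_biunitary_def by blast
qed

lemma laplacian_eq_class:
  assumes "colored_graph V P" "B \<in> P" "(x, y) \<in> B"
  shows "laplacian P c x y = c B"
proof -
  have part: "partition_on {(x, y). x \<in> V \<and> y \<in> V \<and> x \<noteq> y} P"
    using assms(1) unfolding colored_graph_def by blast
  then have "x \<noteq> y" using partition_onD1 assms(2,3) by fastforce
  moreover have "(THE B'. B' \<in> P \<and> (x, y) \<in> B') = B"
    using assms(2,3) disjointD[OF partition_onD2[OF part]] by (intro the_equality) auto
  ultimately show ?thesis unfolding laplacian_def by simp
qed

lemma free_prod_classesE:
  assumes "B \<in> free_prod_classes T Z E F"
  obtains (copy) Er where "Er \<in> E" "B = {((i, a), (j, a)) | i j a. (i, j) \<in> Er \<and> a \<in> Z}"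
    | (across) Fs where "Fs \<in> F" "B = {((i, a), (j, b)) | i j a b. i \<in> T \<and> j \<in> T \<and> (a, b) \<in> Fs}"
  using assms unfolding free_prod_classes_def by blast

lemma free_prod_class_snd_eq_iff:
  assumes "colored_graph Z F" "B \<in> free_prod_classes T Z E F" "(x, b) \<in> B" "(x', b') \<in> B"
  shows "(snd x = snd b) \<longleftrightarrow> (snd x' = snd b')"
  using assms(2)
proof (cases rule: free_prod_classesE)
  case copy
  then show ?thesis using assms(3,4) by auto
next
  case (across Fs)
  have "Fs \<subseteq> {(a, b). a \<in> Z \<and> b \<in> Z \<and> a \<noteq> b}"
    using assms(1) across(1) partition_onD1 unfolding colored_graph_def by blast
  then show ?thesis using assms(3,4) across(2) by auto
qed

lemma free_prod_class_unique:
  assumes gT: "colored_graph T E" and gZ: "colored_graph Z F"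
    and B: "B \<in> free_prod_classes T Z E F" "p \<in> B"
    and B': "B' \<in> free_prod_classes T Z E F" "p \<in> B'"
  shows "B = B'"
proof -
  have disjE: "disjoint E" and disjF: "disjoint F"
    using gT gZ partition_onD2 unfolding colored_graph_def by blast+
  have F_offdiag: "a \<noteq> b" if "Fs \<in> F" "(a, b) \<in> Fs" for Fs a b
    using gZ that partition_onD1 unfolding colored_graph_def by fastforce
  from B(1) show ?thesis
  proof (cases rule: free_prod_classesE)
    case (copy Er)
    from B'(1) show ?thesis
    proof (cases rule: free_prod_classesE)
      case (copy Er')
      with \<open>B = _\<close> B(2) B'(2) have "Er \<inter> Er' \<noteq> {}" by blast
      then have "Er = Er'" using disjointD[OF disjE] \<open>Er \<in> E\<close> \<open>Er' \<in> E\<close> by blast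
      then show ?thesis using \<open>B = _\<close> \<open>B' = _\<close> by simp
    next
      case (across Fs')
      then show ?thesis using \<open>B = _\<close> B(2) B'(2) F_offdiag by blast
    qed
  next
    case (across Fs)
    from B'(1) show ?thesis
    proof (cases rule: free_prod_classesE)
      case (copy Er')
      then show ?thesis using \<open>B = _\<close> B(2) B'(2) F_offdiag \<open>Fs \<in> F\<close> by blast
    next
      case (across Fs')
      with \<open>B = _\<close> B(2) B'(2) have "Fs \<inter> Fs' \<noteq> {}" by blast
      then have "Fs = Fs'" using disjointD[OF disjF] \<open>Fs \<in> F\<close> \<open>Fs' \<in> F\<close> by blast
      then show ?thesis using \<open>B = _\<close> \<open>B' = _\<close> by simp
    qed
  qed
qed

lemma free_prod_class_exists:
  assumes gT: "colored_graph T E" and gZ: "colored_graph Z F"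
    and "x \<in> T \<times> Z" "b \<in> T \<times> Z" "x \<noteq> b"
  shows "\<exists>B\<in>free_prod_classes T Z E F. (x, b) \<in> B"
proof -
  obtain i \<alpha> j \<beta> where xb: "x = (i, \<alpha>)" "b = (j, \<beta>)" by fastforce
  have coverE: "{(x, y). x \<in> T \<and> y \<in> T \<and> x \<noteq> y} = \<Union>E"
    and coverF: "{(x, y). x \<in> Z \<and> y \<in> Z \<and> x \<noteq> y} = \<Union>F"
    using gT gZ partition_onD1 unfolding colored_graph_def by blast+
  show ?thesis
  proof (cases "\<alpha> = \<beta>")
    case True
    then obtain Er where Er: "Er \<in> E" "(i, j) \<in> Er" using coverE assms(3-5) xb by blast
    let ?B = "{((i, a), (j, a)) | i j a. (i, j) \<in> Er \<and> a \<in> Z}"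
    have "(x, b) \<in> ?B" using Er(2) True assms(3) xb by auto
    moreover have "?B \<in> free_prod_classes T Z E F" unfolding free_prod_classes_def using Er(1) by blast
    ultimately show ?thesis by (rule bexI)
  next
    case False
    then obtain Fs where Fs: "Fs \<in> F" "(\<alpha>, \<beta>) \<in> Fs" using coverF assms(3,4) xb by blast
    let ?B = "{((i, a), (j, b)) | i j a b. i \<in> T \<and> j \<in> T \<and> (a, b) \<in> Fs}"
    have "(x, b) \<in> ?B" using Fs(2) assms(3,4) xb by auto
    moreover have "?B \<in> free_prod_classes T Z E F" unfolding free_prod_classes_def using Fs(1) by blast
    ultimately show ?thesis by (rule bexI)
  qed
qed

lemma colored_graph_free_prod:
  assumes gT: "colored_graph T E" and gZ: "colored_graph Z F" and "T \<noteq> {}" "Z \<noteq> {}"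
  shows "colored_graph (T \<times> Z) (free_prod_classes T Z E F)"
proof -
  have partE: "partition_on {(x, y). x \<in> T \<and> y \<in> T \<and> x \<noteq> y} E"
    and partF: "partition_on {(x, y). x \<in> Z \<and> y \<in> Z \<and> x \<noteq> y} F"
    using gT gZ unfolding colored_graph_def by blast+
  have class_sub_nonempty:
    "B \<subseteq> {(x, y). x \<in> T \<times> Z \<and> y \<in> T \<times> Z \<and> x \<noteq> y} \<and> B \<noteq> {}"
    if "B \<in> free_prod_classes T Z E F" for B
    using that
  proof (cases rule: free_prod_classesE)
    case (copy Er)
    have "Er \<subseteq> {(x, y). x \<in> T \<and> y \<in> T \<and> x \<noteq> y}" "Er \<noteq> {}"
      using copy(1) partition_onD1[OF partE] partition_onD3[OF partE] by blast+
    with copy(2) \<open>Z \<noteq> {}\<close> show ?thesis by auto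
  next
    case (across Fs)
    have "Fs \<subseteq> {(x, y). x \<in> Z \<and> y \<in> Z \<and> x \<noteq> y}" "Fs \<noteq> {}"
      using across(1) partition_onD1[OF partF] partition_onD3[OF partF] by blast+
    with across(2) \<open>T \<noteq> {}\<close> show ?thesis by auto
  qed
  have "partition_on {(x, y). x \<in> T \<times> Z \<and> y \<in> T \<times> Z \<and> x \<noteq> y} (free_prod_classes T Z E F)"
  proof (rule partition_onI)
    show "\<Union>(free_prod_classes T Z E F) = {(x, y). x \<in> T \<times> Z \<and> y \<in> T \<times> Z \<and> x \<noteq> y}"
    proof
      show "\<Union>(free_prod_classes T Z E F) \<subseteq> {(x, y). x \<in> T \<times> Z \<and> y \<in> T \<times> Z \<and> x \<noteq> y}"
        using class_sub_nonempty by blast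
      show "{(x, y). x \<in> T \<times> Z \<and> y \<in> T \<times> Z \<and> x \<noteq> y} \<subseteq> \<Union>(free_prod_classes T Z E F)"
        using free_prod_class_exists[OF gT gZ] by fast
    qed
    show "disjnt B B'" if "B \<in> free_prod_classes T Z E F" "B' \<in> free_prod_classes T Z E F" "B \<noteq> B'"
      for B B'
      using that free_prod_class_unique[OF gT gZ] unfolding disjnt_def by blast
    show "{} \<notin> free_prod_classes T Z E F" using class_sub_nonempty by blast
  qed
  moreover have "finite (T \<times> Z)" using gT gZ unfolding colored_graph_def by simp
  ultimately show ?thesis unfolding colored_graph_def by blast
qed

lemma free_prod_block_orthogonal:
  fixes W :: "'t \<times> 'z \<Rightarrow> 't \<times> 'z \<Rightarrow> 'h::complex_inner \<Rightarrow> 'h"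
  assumes gT: "colored_graph T E" and gZ: "colored_graph Z F"
    and inj: "inj_on c (free_prod_classes T Z E F)"
    and mb: "magic_biunitary (T \<times> Z) W"
    and cs: "commutes_scalar (T \<times> Z) W (laplacian (free_prod_classes T Z E F) c)"
    and V: "x \<in> T \<times> Z" "a \<in> T \<times> Z" "b \<in> T \<times> Z" "y \<in> T \<times> Z"
    and kind: "(snd x = snd b) \<noteq> (snd a = snd y)"
  shows "W x a (W b y v) = 0"
proof -
  have fin: "finite (T \<times> Z)" using gT gZ unfolding colored_graph_def by simp
  consider "x = b" | "a = y" | "x \<noteq> b" "a \<noteq> y" by blast
  then show ?thesis
  proof cases
    case 1
    with kind have "a \<noteq> y" by auto
    with 1 show ?thesis using magic_biunitary_row_orthogonal[OF fin mb V(1,2,4)] by simp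
  next
    case 2
    with kind have "x \<noteq> b" by auto
    with 2 show ?thesis using magic_biunitary_col_orthogonal[OF fin mb V(2,1,3)] by simp
  next
    case 3
    have graph: "colored_graph (T \<times> Z) (free_prod_classes T Z E F)"
      using V(1) by (intro colored_graph_free_prod[OF gT gZ]) auto
    obtain B where B: "B \<in> free_prod_classes T Z E F" "(x, b) \<in> B"
      using free_prod_class_exists[OF gT gZ V(1,3) 3(1)] by blast
    obtain B' where B': "B' \<in> free_prod_classes T Z E F" "(a, y) \<in> B'"
      using free_prod_class_exists[OF gT gZ V(2,4) 3(2)] by blast
    have "B \<noteq> B'" using free_prod_class_snd_eq_iff[OF gZ B'(1)] B(2) B'(2) kind by blast
    then have "c B' \<noteq> c B" using inj B(1) B'(1) unfolding inj_on_def by blast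
    then have "laplacian (free_prod_classes T Z E F) c a y \<noteq> laplacian (free_prod_classes T Z E F) c x b"
      using laplacian_eq_class[OF graph B] laplacian_eq_class[OF graph B'] by simp
    then show ?thesis by (rule commutes_scalar_orthogonal[OF fin mb cs V])
  qed
qed

theorem lemma6p2:
  fixes T :: "'t set" and Z :: "'z set"
    and E :: "('t \<times> 't) set set" and F :: "('z \<times> 'z) set set"
    and c :: "(('t \<times> 'z) \<times> ('t \<times> 'z)) set \<Rightarrow> complex"
    and W :: "'t \<times> 'z \<Rightarrow> 't \<times> 'z \<Rightarrow> 'h::complex_inner \<Rightarrow> 'h"
    and \<alpha> :: 'z
  assumes "colored_graph T E" and "colored_graph Z F"
    and "inj_on c (free_prod_classes T Z E F)"
    and "magic_biunitary (T \<times> Z) W"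
    and "commutes_scalar (T \<times> Z) W (laplacian (free_prod_classes T Z E F) c)"
    and "\<alpha> \<in> Z"
  shows "magic_biunitary T (\<lambda>i j. opsum Z (\<lambda>\<beta>. W (i, \<alpha>) (j, \<beta>)))"
proof (rule magic_biunitary_block_sum)
  show "finite T" "finite Z" using assms(1,2) unfolding colored_graph_def by blast+
  show "W x a (W b y v) = 0"
    if "x \<in> T \<times> Z" "a \<in> T \<times> Z" "b \<in> T \<times> Z" "y \<in> T \<times> Z" "(snd x = snd b) \<noteq> (snd a = snd y)"
    for x a b y v
    using free_prod_block_orthogonal[OF assms(1-5) that] .
qed (use assms in auto)

end
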